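(* Let $\Omega\subset\mathbb{R}^3$ be open, $T>0$, and let $A:[0,T]\times\Omega\to\mathbb{T}$ and $\gamma:[0,T]\times\Omega\to\mathbb{S}$ be sufficiently smooth (classical) fields solving $$\operatorname{div} A=0,\qquad A_t+\operatorname{curl} S\gamma=0,\qquad S\gamma_t-\operatorname{sym}\operatorname{curl} A=0,\qquad \operatorname{div}\operatorname{div} S\gamma=0 .$$ Let $A_0:=A(0)$, $\alpha:=\tfrac12\operatorname{tr}\gamma$ and $\beta(t):=\tfrac12\int_0^t\operatorname{div}S\gamma(s)\,ds+\operatorname{vskw}A_0$. Then $$\gamma_{tt}+S\operatorname{inc}\gamma-2\operatorname{def}\beta_t-2\operatorname{hess}\alpha=0 .$$
   Context: $\mathbb{M}$ is the space of real $3\times3$ matrices, $\mathbb{S}$ the symmetric ones, $\mathbb{T}$ the trace-free ones. For $M\in\mathbb{M}$: $S(M):=M^\top-\operatorname{tr}(M)I$; $\operatorname{sym}M$ is the symmetric part; $(\operatorname{vskw}M)_i:=-\tfrac12\epsilon_{ijk}M_{jk}$ (Levi-Civita symbol, summation convention). Differential operators act column-wise on matrix fields: $(\operatorname{curl}M)_{ij}=\epsilon_{ikl}\partial_kM_{lj}$, $(\operatorname{div}M)_i=\partial_jM_{ji}$; for a vector field $v$, $(\operatorname{grad}v)_{ij}=\partial_iv_j$, $\operatorname{def}v:=\operatorname{sym}\operatorname{grad}v$; for a scalar $u$, $\operatorname{hess}u$ is the Hessian; $\operatorname{div}\operatorname{div}\sigma:=\operatorname{div}(\operatorname{div}\sigma)$;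 $\operatorname{inc}M:=\operatorname{curl}\big((\operatorname{curl}M)^\top\big)$. Subscript $t$ denotes time derivative. *)

theory Defs
  imports "HOL-Analysis.Analysis"
begin

type_synonym mat3 = "real^3^3"
type_synonym vec3 = "real^3"

definition eps :: "3 \<Rightarrow> 3 \<Rightarrow> 3 \<Rightarrow> real" where
  "eps i j k =
     (if (i,j,k) \<in> {(1,2,3),(2,3,1),(3,1,2)} then 1
      else if (i,j,k) \<in> {(1,3,2),(3,2,1),(2,1,3)} then -1 else 0)"

definition pd :: "'a::real_normed_vector \<Rightarrow> ('a \<Rightarrow> 'b::real_normed_vector) \<Rightarrow> 'a \<Rightarrow> 'b" where
  "pd v f z = vector_derivative (\<lambda>h. f (z + h *\<^sub>R v)) (at 0)"

fun iterpd :: "'a::real_normed_vector list \<Rightarrow> ('a \<Rightarrow> 'b::real_normed_vector) \<Rightarrow> 'a \<Rightarrow> 'b" where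
  "iterpd [] f = f"
| "iterpd (v # vs) f = pd v (iterpd vs f)"

definition smooth_on :: "'a::euclidean_space set \<Rightarrow> ('a \<Rightarrow> 'b::real_normed_vector) \<Rightarrow> bool" where
  "smooth_on U f \<longleftrightarrow>
     (\<forall>vs. set vs \<subseteq> Basis \<longrightarrow>
        continuous_on U (iterpd vs f) \<and>
        (\<forall>v\<in>Basis. \<forall>z\<in>U. (\<lambda>h. iterpd vs f (z + h *\<^sub>R v)) differentiable (at 0)))"

definition dx :: "3 \<Rightarrow> (vec3 \<Rightarrow> 'b::real_normed_vector) \<Rightarrow> vec3 \<Rightarrow> 'b" where
  "dx k F x = vector_derivative (\<lambda>h. F (x + h *\<^sub>R axis k 1)) (at 0)"

definition dt :: "real \<Rightarrow> (real \<Rightarrow> vec3 \<Rightarrow> 'b::real_normed_vector) \<Rightarrow> real \<Rightarrow> vec3 \<Rightarrow> 'b" where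
  "dt T F t x = vector_derivative (\<lambda>s. F s x) (at t within {0..T})"

definition Smap :: "mat3 \<Rightarrow> mat3" where
  "Smap M = transpose M - trace M *\<^sub>R mat 1"

definition symm :: "mat3 \<Rightarrow> mat3" where
  "symm M = (1/2) *\<^sub>R (M + transpose M)"

definition vskw :: "mat3 \<Rightarrow> vec3" where
  "vskw M = (\<chi> i. - (1/2) * (\<Sum>j\<in>UNIV. \<Sum>k\<in>UNIV. eps i j k * M $ j $ k))"

definition curl :: "(vec3 \<Rightarrow> mat3) \<Rightarrow> vec3 \<Rightarrow> mat3" where
  "curl M x = (\<chi> i j. \<Sum>k\<in>UNIV. \<Sum>l\<in>UNIV. eps i k l * dx k (\<lambda>y. M y $ l $ j) x)"

definition divm :: "(vec3 \<Rightarrow> mat3) \<Rightarrow> vec3 \<Rightarrow> vec3" where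
  "divm M x = (\<chi> i. \<Sum>j\<in>UNIV. dx j (\<lambda>y. M y $ j $ i) x)"

definition divv :: "(vec3 \<Rightarrow> vec3) \<Rightarrow> vec3 \<Rightarrow> real" where
  "divv v x = (\<Sum>i\<in>UNIV. dx i (\<lambda>y. v y $ i) x)"

definition grad :: "(vec3 \<Rightarrow> vec3) \<Rightarrow> vec3 \<Rightarrow> mat3" where
  "grad v x = (\<chi> i j. dx i (\<lambda>y. v y $ j) x)"

definition defo :: "(vec3 \<Rightarrow> vec3) \<Rightarrow> vec3 \<Rightarrow> mat3" where
  "defo v x = symm (grad v x)"

definition hess :: "(vec3 \<Rightarrow> real) \<Rightarrow> vec3 \<Rightarrow> mat3" where
  "hess u x = (\<chi> i j. dx i (dx j u) x)"

definition divdiv :: "(vec3 \<Rightarrow> mat3) \<Rightarrow> vec3 \<Rightarrow> real" where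
  "divdiv M x = divv (divm M) x"

definition inc :: "(vec3 \<Rightarrow> mat3) \<Rightarrow> vec3 \<Rightarrow> mat3" where
  "inc M = curl (\<lambda>y. transpose (curl M y))"

end

theory Submission
  imports Defs
begin

(* Fix (t, x) and let D i j be the second spatial partials of gamma at (t, x). By Schwarz's
   theorem D i j = D j i, and each D i j is a symmetric matrix because gamma is. Differentiating
   S gamma_t = sym curl A in time, commuting d_t with d_k and inserting A_t = - curl S gamma gives
   gamma_tt = - S^-1 sym curl curl S gamma; moreover beta_t = div S gamma / 2, so
   2 def beta_t = sym grad div S gamma, and 2 hess alpha = hess tr gamma. All terms are thus
   linear in D, and the claim becomes the pointwise identity
     S inc gamma = S^-1 sym curl curl S gamma + sym grad div S gamma + hess tr gamma,
   which holds for every such D with div div S gamma = 0 and is checked componentwise. *)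

lemma iterpd_pd: "iterpd vs (pd v f) = iterpd (vs @ [v]) f"
  by (induction vs) simp_all

lemma smooth_on_pd:
  assumes "smooth_on U f" and "v \<in> Basis"
  shows "smooth_on U (pd v f)"
  unfolding smooth_on_def iterpd_pd
proof (intro allI impI)
  fix vs :: "'a list"
  assume "set vs \<subseteq> Basis"
  then have "set (vs @ [v]) \<subseteq> Basis"
    using assms(2) by simp
  then show "continuous_on U (iterpd (vs @ [v]) f) \<and>
      (\<forall>w\<in>Basis. \<forall>z\<in>U. (\<lambda>h. iterpd (vs @ [v]) f (z + h *\<^sub>R w)) differentiable (at 0))"
    using assms(1) unfolding smooth_on_def by blast
qed

lemma smooth_on_continuous_on: "smooth_on U f \<Longrightarrow> continuous_on U f"
  unfolding smooth_on_def by (metis empty_set empty_subsetI iterpd.simps(1))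

lemma smooth_on_has_pd:
  assumes "smooth_on U f" and "z \<in> U" and "v \<in> Basis"
  shows "((\<lambda>h. f (z + h *\<^sub>R v)) has_vector_derivative pd v f z) (at 0)"
proof -
  have "(\<lambda>h. f (z + h *\<^sub>R v)) differentiable (at 0)"
    using assms unfolding smooth_on_def by (metis empty_set empty_subsetI iterpd.simps(1))
  then show ?thesis
    by (simp add: pd_def vector_derivative_works)
qed

lemma has_vector_derivative_line_shift:
  assumes "((\<lambda>h. f (p + (r + h) *\<^sub>R v)) has_vector_derivative D) (at 0)"
  shows "((\<lambda>r. f (p + r *\<^sub>R v)) has_vector_derivative D) (at r)"
proof -
  have "((\<lambda>h. f (p + (r + h) *\<^sub>R v)) \<circ> (\<lambda>s. s - r) has_vector_derivative 1 *\<^sub>R D) (at r)"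
    by (rule vector_diff_chain_at) (auto intro!: derivative_eq_intros simp: assms)
  then show ?thesis
    by (simp add: comp_def)
qed

lemma has_vector_derivative_vec_lambda:
  fixes f :: "real \<Rightarrow> 'n::finite \<Rightarrow> 'a::euclidean_space"
  assumes "\<And>i. ((\<lambda>h. f h i) has_vector_derivative f' i) F"
  shows "((\<lambda>h. \<chi> i. f h i) has_vector_derivative (\<chi> i. f' i)) F"
proof -
  have expand: "(\<chi> i. c i) = (\<Sum>i\<in>UNIV. axis i (c i))" for c :: "'n \<Rightarrow> 'a"
    unfolding vec_eq_iff by (simp add: axis_def)
  have axis_linear: "bounded_linear (axis i :: 'a \<Rightarrow> 'a ^ 'n)" for i
    by (rule bounded_linearI') (simp_all add: axis_def vec_eq_iff)
  show ?thesis
    unfolding expand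
    by (intro has_vector_derivative_sum bounded_linear.has_vector_derivative[OF axis_linear] assms)
qed

lemma open_contains_parallelogram:
  fixes z v w :: "'a::real_normed_vector"
  assumes "open U" and "z \<in> U"
  obtains \<delta> where "\<delta> > 0" and "\<And>s r. \<bar>s\<bar> \<le> \<delta> \<Longrightarrow> \<bar>r\<bar> \<le> \<delta> \<Longrightarrow> z + s *\<^sub>R v + r *\<^sub>R w \<in> U"
proof -
  obtain e where "e > 0" and ball: "ball z e \<subseteq> U"
    using assms openE by blast
  define \<delta> where "\<delta> = e / (2 * (norm v + norm w + 1))"
  have "norm v + norm w + 1 > 0"
    by (intro add_nonneg_pos) auto
  then have "\<delta> > 0"
    using \<open>e > 0\<close> by (simp add: \<delta>_def)
  moreover have "z + s *\<^sub>R v + r *\<^sub>R w \<in> U" if "\<bar>s\<bar> \<le> \<delta>" and "\<bar>r\<bar> \<le> \<delta>" for s r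
  proof -
    have "norm (s *\<^sub>R v + r *\<^sub>R w) \<le> \<bar>s\<bar> * norm v + \<bar>r\<bar> * norm w"
      using norm_triangle_ineq[of "s *\<^sub>R v" "r *\<^sub>R w"] by simp
    also have "\<dots> \<le> \<delta> * (norm v + norm w)"
      using that by (simp add: distrib_left add_mono mult_right_mono)
    also have "\<dots> < \<delta> * (2 * (norm v + norm w + 1))"
      using \<open>\<delta> > 0\<close>
      by (intro mult_strict_left_mono) (auto simp: algebra_simps intro!: add_nonneg_pos)
    also have "\<dots> = e"
      using \<open>norm v + norm w + 1 > 0\<close> by (simp add: \<delta>_def)
    finally have "z + s *\<^sub>R v + r *\<^sub>R w \<in> ball z e"
      using norm_minus_cancel[of "s *\<^sub>R v + r *\<^sub>R w"] by (simp add: dist_norm add.assoc)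
    with ball show ?thesis
      by blast
  qed
  ultimately show ?thesis
    using that by blast
qed

lemma has_integral_derivative_along_line:
  fixes f :: "'a::real_normed_vector \<Rightarrow> 'b::banach"
  assumes "a \<le> b" and "\<And>r. r \<in> {a..b} \<Longrightarrow> p + r *\<^sub>R w \<in> U"
    and "\<And>y. y \<in> U \<Longrightarrow> ((\<lambda>h. f (y + h *\<^sub>R w)) has_vector_derivative fw y) (at 0)"
  shows "((\<lambda>r. fw (p + r *\<^sub>R w)) has_integral f (p + b *\<^sub>R w) - f (p + a *\<^sub>R w)) {a..b}"
proof (rule fundamental_theorem_of_calculus[OF \<open>a \<le> b\<close>])
  fix r
  assume "r \<in> {a..b}"
  then have "((\<lambda>h. f (p + r *\<^sub>R w + h *\<^sub>R w)) has_vector_derivative fw (p + r *\<^sub>R w)) (at 0)"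
    by (intro assms(2,3))
  then have "((\<lambda>h. f (p + (r + h) *\<^sub>R w)) has_vector_derivative fw (p + r *\<^sub>R w)) (at 0)"
    by (simp add: scaleR_add_left add.assoc)
  then show "((\<lambda>r. f (p + r *\<^sub>R w)) has_vector_derivative fw (p + r *\<^sub>R w)) (at r within {a..b})"
    by (rule has_vector_derivative_at_within[OF has_vector_derivative_line_shift])
qed

lemma has_vector_derivative_integral_along_line:
  fixes fw :: "'a::real_normed_vector \<Rightarrow> 'b::banach"
  assumes "\<delta> > 0" and "{a..b} \<subseteq> {-\<delta>..\<delta>}"
    and square: "\<And>s r. \<bar>s\<bar> \<le> \<delta> \<Longrightarrow> \<bar>r\<bar> \<le> \<delta> \<Longrightarrow> z + s *\<^sub>R v + r *\<^sub>R w \<in> U"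
    and fwv: "\<And>y. y \<in> U \<Longrightarrow> ((\<lambda>h. fw (y + h *\<^sub>R v)) has_vector_derivative fwv y) (at 0)"
    and "continuous_on U fw" and "continuous_on U fwv"
  shows "((\<lambda>s. integral {a..b} (\<lambda>r. fw (z + s *\<^sub>R v + r *\<^sub>R w)))
          has_vector_derivative integral {a..b} (\<lambda>r. fwv (z + r *\<^sub>R w))) (at 0)"
proof -
  let ?I = "{-\<delta><..<\<delta>}"
  have in_U: "z + s *\<^sub>R v + r *\<^sub>R w \<in> U" if "s \<in> ?I" and "r \<in> cbox a b" for s r
    using that assms(2) by (intro square) (auto simp: cbox_interval)
  have "((\<lambda>s. integral (cbox a b) (\<lambda>r. fw (z + s *\<^sub>R v + r *\<^sub>R w)))
          has_vector_derivative integral (cbox a b) (\<lambda>r. fwv (z + 0 *\<^sub>R v + r *\<^sub>R w)))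
        (at 0 within ?I)"
  proof (rule leibniz_rule_vector_derivative)
    fix s r
    assume "s \<in> ?I" and "r \<in> cbox a b"
    have shift: "(z + r *\<^sub>R w) + (s + h) *\<^sub>R v = (z + s *\<^sub>R v + r *\<^sub>R w) + h *\<^sub>R v" for h
      by (simp add: algebra_simps)
    have "((\<lambda>h. fw ((z + r *\<^sub>R w) + (s + h) *\<^sub>R v))
        has_vector_derivative fwv (z + s *\<^sub>R v + r *\<^sub>R w)) (at 0)"
      unfolding shift by (intro fwv in_U \<open>s \<in> ?I\<close> \<open>r \<in> cbox a b\<close>)
    from has_vector_derivative_line_shift[OF this]
    have "((\<lambda>s. fw (z + s *\<^sub>R v + r *\<^sub>R w))
        has_vector_derivative fwv (z + s *\<^sub>R v + r *\<^sub>R w)) (at s)"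
      by (simp add: algebra_simps)
    then show "((\<lambda>s. fw (z + s *\<^sub>R v + r *\<^sub>R w))
        has_vector_derivative fwv (z + s *\<^sub>R v + r *\<^sub>R w)) (at s within ?I)"
      by (rule has_vector_derivative_at_within)
  next
    fix s
    assume "s \<in> ?I"
    then show "(\<lambda>r. fw (z + s *\<^sub>R v + r *\<^sub>R w)) integrable_on cbox a b"
      using in_U
      by (intro integrable_continuous continuous_on_compose2[OF assms(5)])
        (auto intro!: continuous_intros)
  next
    show "continuous_on (?I \<times> cbox a b) (\<lambda>(s, r). fwv (z + s *\<^sub>R v + r *\<^sub>R w))"
      using in_U unfolding case_prod_beta
      by (intro continuous_on_compose2[OF assms(6)]) (auto intro!: continuous_intros)
  qed (use \<open>\<delta> > 0\<close> in \<open>simp_all add: convex_real_interval\<close>)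
  then show ?thesis
    using \<open>\<delta> > 0\<close> by (simp add: cbox_interval has_vector_derivative_within_open[of 0 ?I])
qed

lemma mixed_partials_commute:
  fixes f :: "'a::real_normed_vector \<Rightarrow> 'b::banach"
  assumes "open U" and "z \<in> U"
    and fv: "\<And>y. y \<in> U \<Longrightarrow> ((\<lambda>h. f (y + h *\<^sub>R v)) has_vector_derivative fv y) (at 0)"
    and fw: "\<And>y. y \<in> U \<Longrightarrow> ((\<lambda>h. f (y + h *\<^sub>R w)) has_vector_derivative fw y) (at 0)"
    and fwv: "\<And>y. y \<in> U \<Longrightarrow> ((\<lambda>h. fw (y + h *\<^sub>R v)) has_vector_derivative fwv y) (at 0)"
    and "continuous_on U fw" and "continuous_on U fwv"
    and fvw: "((\<lambda>h. fv (z + h *\<^sub>R w)) has_vector_derivative fvw) (at 0)"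
  shows "fvw = fwv z"
proof -
  obtain \<delta> where "\<delta> > 0"
    and square: "\<And>s r. \<bar>s\<bar> \<le> \<delta> \<Longrightarrow> \<bar>r\<bar> \<le> \<delta> \<Longrightarrow> z + s *\<^sub>R v + r *\<^sub>R w \<in> U"
    using open_contains_parallelogram[OF assms(1,2)] by blast
  let ?I = "{-\<delta><..<\<delta>}"
  \<comment> \<open>differentiate the fundamental theorem along \<open>w\<close> in the direction \<open>v\<close>, under the integral\<close>
  have fv_integral: "fv (z + u *\<^sub>R w) = integral {-\<delta>..u} (\<lambda>r. fwv (z + r *\<^sub>R w)) + fv (z - \<delta> *\<^sub>R w)"
    if "u \<in> ?I" for u
  proof -
    have "((\<lambda>s. f (z + u *\<^sub>R w + s *\<^sub>R v) - f (z - \<delta> *\<^sub>R w + s *\<^sub>R v))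
            has_vector_derivative fv (z + u *\<^sub>R w) - fv (z - \<delta> *\<^sub>R w)) (at 0)"
      using that \<open>\<delta> > 0\<close> square[of 0 u] square[of 0 "-\<delta>"]
      by (intro has_vector_derivative_diff fv) auto
    moreover have "f (z + u *\<^sub>R w + s *\<^sub>R v) - f (z - \<delta> *\<^sub>R w + s *\<^sub>R v)
        = integral {-\<delta>..u} (\<lambda>r. fw (z + s *\<^sub>R v + r *\<^sub>R w))" if "s \<in> ?I" for s
    proof -
      have "((\<lambda>r. fw (z + s *\<^sub>R v + r *\<^sub>R w)) has_integral
          f (z + s *\<^sub>R v + u *\<^sub>R w) - f (z + s *\<^sub>R v + (-\<delta>) *\<^sub>R w)) {-\<delta>..u}"
        using \<open>u \<in> ?I\<close> that by (intro has_integral_derivative_along_line fw) (auto intro!: square)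
      then show ?thesis
        by (simp add: integral_unique algebra_simps)
    qed
    ultimately have "((\<lambda>s. integral {-\<delta>..u} (\<lambda>r. fw (z + s *\<^sub>R v + r *\<^sub>R w)))
            has_vector_derivative fv (z + u *\<^sub>R w) - fv (z - \<delta> *\<^sub>R w)) (at 0)"
      using \<open>\<delta> > 0\<close> by (elim has_vector_derivative_transform_within_open[of _ _ _ ?I]) auto
    moreover have "((\<lambda>s. integral {-\<delta>..u} (\<lambda>r. fw (z + s *\<^sub>R v + r *\<^sub>R w)))
            has_vector_derivative integral {-\<delta>..u} (\<lambda>r. fwv (z + r *\<^sub>R w))) (at 0)"
      using that square assms(6,7)
      by (intro has_vector_derivative_integral_along_line[OF \<open>\<delta> > 0\<close>] fwv) auto
    ultimately have "fv (z + u *\<^sub>R w) - fv (z - \<delta> *\<^sub>R w) = integral {-\<delta>..u} (\<lambda>r. fwv (z + r *\<^sub>R w))"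
      by (rule vector_derivative_unique_at)
    then show ?thesis
      by (simp add: algebra_simps)
  qed
  have "continuous_on {-\<delta>..\<delta>} (\<lambda>r. fwv (z + r *\<^sub>R w))"
    using square[of 0] by (intro continuous_on_compose2[OF assms(7)] continuous_intros) auto
  then have "((\<lambda>u. integral {-\<delta>..u} (\<lambda>r. fwv (z + r *\<^sub>R w))) has_vector_derivative fwv z)
      (at 0 within {-\<delta>..\<delta>})"
    using integral_has_vector_derivative[of "-\<delta>" \<delta> _ 0] \<open>\<delta> > 0\<close> by fastforce
  then have "((\<lambda>u. integral {-\<delta>..u} (\<lambda>r. fwv (z + r *\<^sub>R w))) has_vector_derivative fwv z) (at 0)"
    using \<open>\<delta> > 0\<close> by (simp add: at_within_Icc_at)
  then have "((\<lambda>u. integral {-\<delta>..u} (\<lambda>r. fwv (z + r *\<^sub>R w)) + fv (z - \<delta> *\<^sub>R w))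
      has_vector_derivative fwv z) (at 0)"
    by (rule has_vector_derivative_add_const[THEN iffD2])
  then have "((\<lambda>u. fv (z + u *\<^sub>R w)) has_vector_derivative fwv z) (at 0)"
    using \<open>\<delta> > 0\<close> fv_integral
    by (elim has_vector_derivative_transform_within_open[of _ _ _ ?I]) auto
  then show ?thesis
    using fvw vector_derivative_unique_at by blast
qed

lemma smooth_on_pd_commute:
  fixes f :: "'a::euclidean_space \<Rightarrow> 'b::banach"
  assumes "open U" and "smooth_on U f" and "z \<in> U" and "v \<in> Basis" and "w \<in> Basis"
  shows "pd w (pd v f) z = pd v (pd w f) z"
  using assms
  by (intro mixed_partials_commute[where U = U and f = f and fv = "pd v f" and fw = "pd w f"
        and fwv = "pd v (pd w f)"])
    (auto intro: smooth_on_has_pd smooth_on_pd smooth_on_continuous_on)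

lemma bounded_linear_transpose: "bounded_linear (transpose :: mat3 \<Rightarrow> mat3)"
  by (rule bounded_linearI') (simp_all add: transpose_def vec_eq_iff)

lemma bounded_linear_trace: "bounded_linear (trace :: mat3 \<Rightarrow> real)"
  by (rule bounded_linearI') (simp_all add: trace_def sum.distrib sum_distrib_left)

lemma bounded_linear_Smap: "bounded_linear Smap"
  by (rule bounded_linearI')
    (simp_all add: Smap_def transpose_def trace_def vec_eq_iff sum.distrib sum_distrib_left
      algebra_simps)

lemma bounded_linear_symm: "bounded_linear symm"
  by (rule bounded_linearI') (simp_all add: symm_def transpose_def vec_eq_iff algebra_simps)

abbreviation pdx :: "3 \<Rightarrow> (real \<times> vec3 \<Rightarrow> 'b::real_normed_vector) \<Rightarrow> real \<times> vec3 \<Rightarrow> 'b"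
  where "pdx k \<equiv> pd (0, axis k 1)"

abbreviation pdt :: "(real \<times> vec3 \<Rightarrow> 'b::real_normed_vector) \<Rightarrow> real \<times> vec3 \<Rightarrow> 'b"
  where "pdt \<equiv> pd (1, 0)"

lemma space_direction_in_Basis: "((0, axis k 1) :: real \<times> vec3) \<in> Basis"
  by (simp add: in_Basis_prod_iff)

lemma time_direction_in_Basis: "((1, 0) :: real \<times> vec3) \<in> Basis"
  by (simp add: in_Basis_prod_iff)

lemma smooth_on_pdx: "smooth_on U g \<Longrightarrow> smooth_on U (pdx k g)"
  by (rule smooth_on_pd[OF _ space_direction_in_Basis])

lemma smooth_on_pdt: "smooth_on U g \<Longrightarrow> smooth_on U (pdt g)"
  by (rule smooth_on_pd[OF _ time_direction_in_Basis])

lemma has_vector_derivative_time_slice: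
  assumes "smooth_on U g" and "(s, y) \<in> U"
  shows "((\<lambda>r. g (r, y)) has_vector_derivative pdt g (s, y)) (at s)"
proof -
  have "((\<lambda>h. g ((0, y) + (s + h) *\<^sub>R (1, 0))) has_vector_derivative pdt g (s, y)) (at 0)"
    using smooth_on_has_pd[OF assms time_direction_in_Basis] by simp
  from has_vector_derivative_line_shift[OF this] show ?thesis
    by simp
qed

definition has_partials :: "(vec3 \<Rightarrow> 'b::real_normed_vector) \<Rightarrow> (3 \<Rightarrow> 'b) \<Rightarrow> vec3 \<Rightarrow> bool" where
  "has_partials F P y \<longleftrightarrow> (\<forall>k. ((\<lambda>h. F (y + h *\<^sub>R axis k 1)) has_vector_derivative P k) (at 0))"

lemma has_partials_dx: "has_partials F P y \<Longrightarrow> dx k F y = P k"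
  unfolding has_partials_def dx_def by (simp add: vector_derivative_at)

lemma has_partials_unique: "has_partials F P y \<Longrightarrow> has_partials F Q y \<Longrightarrow> P = Q"
  by (metis has_partials_dx ext)

lemma has_partials_bounded_linear:
  "bounded_linear L \<Longrightarrow> has_partials F P y \<Longrightarrow> has_partials (\<lambda>y. L (F y)) (\<lambda>k. L (P k)) y"
  unfolding has_partials_def using bounded_linear.has_vector_derivative by blast

lemma has_partials_nth: "has_partials F P y \<Longrightarrow> has_partials (\<lambda>y. F y $ i) (\<lambda>k. P k $ i) y"
  by (rule has_partials_bounded_linear[OF bounded_linear_vec_nth])

lemma dx_nth_nth:
  assumes "has_partials F P y"
  shows "dx k (\<lambda>y. F y $ i $ j) y = P k $ i $ j"
  using has_partials_dx[OF has_partials_nth[OF has_partials_nth[OF assms]]] .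

lemma has_partials_const: "has_partials (\<lambda>y. c) (\<lambda>k. 0) y"
  by (simp add: has_partials_def)

lemma has_vector_derivative_along_line_cong_open:
  fixes y v :: "'a::real_normed_vector"
  assumes "open S" and "y \<in> S" and "\<And>z. z \<in> S \<Longrightarrow> F z = G z"
  shows "((\<lambda>h. F (y + h *\<^sub>R v)) has_vector_derivative D) (at 0) \<longleftrightarrow>
    ((\<lambda>h. G (y + h *\<^sub>R v)) has_vector_derivative D) (at 0)"
proof -
  let ?S = "(\<lambda>h. y + h *\<^sub>R v) -` S"
  have "open ?S"
    by (rule open_vimage[OF assms(1)]) (auto intro!: continuous_intros)
  moreover have "0 \<in> ?S"
    using assms(2) by simp
  ultimately show ?thesis
    using assms(3) has_vector_derivative_transform_within_open[of _ D 0 ?S] by fastforce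
qed

lemma has_partials_cong_open:
  assumes "open S" and "y \<in> S" and "\<And>z. z \<in> S \<Longrightarrow> F z = G z" and "has_partials G P y"
  shows "has_partials F P y"
  unfolding has_partials_def
proof
  fix k
  have "((\<lambda>h. F (y + h *\<^sub>R axis k 1)) has_vector_derivative P k) (at 0) \<longleftrightarrow>
      ((\<lambda>h. G (y + h *\<^sub>R axis k 1)) has_vector_derivative P k) (at 0)"
    by (rule has_vector_derivative_along_line_cong_open) (use assms in auto)
  with assms(4) show "((\<lambda>h. F (y + h *\<^sub>R axis k 1)) has_vector_derivative P k) (at 0)"
    unfolding has_partials_def by blast
qed

definition curl_of :: "(3 \<Rightarrow> mat3) \<Rightarrow> mat3" where
  "curl_of P = (\<chi> i j. \<Sum>k\<in>UNIV. \<Sum>l\<in>UNIV. eps i k l * P k $ l $ j)"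

definition div_of :: "(3 \<Rightarrow> mat3) \<Rightarrow> vec3" where
  "div_of P = (\<chi> i. \<Sum>j\<in>UNIV. P j $ j $ i)"

definition grad_of :: "(3 \<Rightarrow> vec3) \<Rightarrow> mat3" where
  "grad_of P = (\<chi> i j. P i $ j)"

lemma curl_of_uminus: "curl_of (\<lambda>k. - P k) = - curl_of P"
  by (simp add: curl_of_def vec_eq_iff sum_negf)

lemma curl_eq_curl_of:
  assumes "has_partials M P y"
  shows "curl M y = curl_of P"
  unfolding curl_def curl_of_def by (simp add: dx_nth_nth[OF assms])

lemma divm_eq_div_of:
  assumes "has_partials M P y"
  shows "divm M y = div_of P"
  unfolding divm_def div_of_def by (simp add: dx_nth_nth[OF assms])

lemma grad_eq_grad_of:
  assumes "has_partials v P y"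
  shows "grad v y = grad_of P"
  unfolding grad_def grad_of_def
  by (simp add: has_partials_dx[OF has_partials_nth[OF assms]])

lemma divv_eq_trace_grad_of:
  assumes "has_partials v P y"
  shows "divv v y = trace (grad_of P)"
  unfolding divv_def trace_def grad_of_def
  by (simp add: has_partials_dx[OF has_partials_nth[OF assms]])

lemma has_vector_derivative_curl_of:
  assumes "\<And>k. ((\<lambda>h. Q h k) has_vector_derivative Q' k) F"
  shows "((\<lambda>h. curl_of (Q h)) has_vector_derivative curl_of Q') F"
  unfolding curl_of_def
  by (intro has_vector_derivative_vec_lambda has_vector_derivative_sum
      has_vector_derivative_mult_right bounded_linear.has_vector_derivative[OF bounded_linear_vec_nth]
      assms)

lemma has_vector_derivative_div_of:
  assumes "\<And>k. ((\<lambda>h. Q h k) has_vector_derivative Q' k) F"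
  shows "((\<lambda>h. div_of (Q h)) has_vector_derivative div_of Q') F"
  unfolding div_of_def
  by (intro has_vector_derivative_vec_lambda has_vector_derivative_sum
      bounded_linear.has_vector_derivative[OF bounded_linear_vec_nth] assms)

lemma has_partials_curl_of:
  assumes "\<And>k. has_partials (\<lambda>y. Q y k) (\<lambda>i. Q' i k) y"
  shows "has_partials (\<lambda>y. curl_of (Q y)) (\<lambda>i. curl_of (Q' i)) y"
  unfolding has_partials_def
proof
  fix i
  show "((\<lambda>h. curl_of (Q (y + h *\<^sub>R axis i 1))) has_vector_derivative curl_of (Q' i)) (at 0)"
    by (rule has_vector_derivative_curl_of) (use assms in \<open>auto simp: has_partials_def\<close>)
qed

lemma has_partials_div_of:
  assumes "\<And>k. has_partials (\<lambda>y. Q y k) (\<lambda>i. Q' i k) y"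
  shows "has_partials (\<lambda>y. div_of (Q y)) (\<lambda>i. div_of (Q' i)) y"
  unfolding has_partials_def
proof
  fix i
  show "((\<lambda>h. div_of (Q (y + h *\<^sub>R axis i 1))) has_vector_derivative div_of (Q' i)) (at 0)"
    by (rule has_vector_derivative_div_of) (use assms in \<open>auto simp: has_partials_def\<close>)
qed

lemma has_partials_slice:
  assumes "smooth_on U g" and "(t, y) \<in> U"
  shows "has_partials (\<lambda>y. g (t, y)) (\<lambda>k. pdx k g (t, y)) y"
  unfolding has_partials_def
  using smooth_on_has_pd[OF assms space_direction_in_Basis] by simp

lemma eps_simps:
  "eps 1 2 3 = 1" "eps 2 3 1 = 1" "eps 3 1 2 = 1"
  "eps 1 3 2 = -1" "eps 3 2 1 = -1" "eps 2 1 3 = -1"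
  "eps i i k = 0" "eps i k k = 0" "eps k i k = 0"
  by (auto simp: eps_def)

(* inverts Smap since trace (Smap M) = - 2 * trace M *)
definition Smap_inv :: "mat3 \<Rightarrow> mat3" where
  "Smap_inv M = transpose M - ((1/2) * trace M) *\<^sub>R mat 1"

lemma Smap_inv_Smap: "Smap_inv (Smap M) = M"
  unfolding Smap_inv_def Smap_def
  by (simp add: vec_eq_iff trace_def transpose_def mat_def sum_3 forall_3 algebra_simps)

lemma bounded_linear_Smap_inv: "bounded_linear Smap_inv"
  by (rule bounded_linearI')
    (simp_all add: Smap_inv_def transpose_def trace_def mat_def vec_eq_iff sum.distrib
      sum_distrib_left algebra_simps)

lemma Smap_inc_identity:
  fixes D :: "3 \<Rightarrow> 3 \<Rightarrow> mat3"
  assumes D_comm: "\<And>i j. D i j = D j i" and D_sym: "\<And>i j. transpose (D i j) = D i j"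
    and div_div: "trace (grad_of (\<lambda>i. div_of (\<lambda>k. Smap (D i k)))) = 0"
  shows "Smap (curl_of (\<lambda>k. transpose (curl_of (D k)))) =
    Smap_inv (symm (curl_of (\<lambda>k. curl_of (\<lambda>j. Smap (D k j)))))
    + symm (grad_of (\<lambda>i. div_of (\<lambda>k. Smap (D i k)))) + (\<chi> i j. trace (D i j))"
proof -
  have entry_swap: "D i j $ a $ b = D i j $ b $ a" for i j a b
    using arg_cong[OF D_sym[of i j], of "\<lambda>M. M $ b $ a"] by (simp add: transpose_def)
  have comm: "D 2 1 = D 1 2" "D 3 1 = D 1 3" "D 3 2 = D 2 3"
    using D_comm by auto
  have entries_sym:
      "D i j $ 2 $ 1 = D i j $ 1 $ 2" "D i j $ 3 $ 1 = D i j $ 1 $ 3"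
      "D i j $ 3 $ 2 = D i j $ 2 $ 3" for i j
    using entry_swap by auto
  note div_div' = div_div[unfolded grad_of_def div_of_def Smap_def trace_def transpose_def mat_def,
      simplified sum_3 comm entries_sym]
  show ?thesis
    unfolding Smap_inv_def Smap_def symm_def trace_def transpose_def mat_def curl_of_def grad_of_def
      div_of_def
    using div_div' by (simp add: vec_eq_iff forall_3 sum_3 eps_simps comm entries_sym field_simps)
qed

lemma dt_eq_pdt:
  fixes g :: "real \<times> vec3 \<Rightarrow> 'b::euclidean_space"
  assumes "smooth_on U g" and "T > 0" and "s \<in> {0..T}" and "(s, y) \<in> U"
  shows "dt T (\<lambda>s y. g (s, y)) s y = pdt g (s, y)"
  unfolding dt_def using assms
  by (intro vector_derivative_within_closed_interval
      has_vector_derivative_at_within[OF has_vector_derivative_time_slice]) auto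

lemma dt_integral:
  fixes \<phi> :: "real \<Rightarrow> 'b::euclidean_space"
  assumes "T > 0" and "t \<in> {0..T}" and "continuous_on {0..T} \<phi>"
    and "\<And>s. F s y = c *\<^sub>R integral {0..s} \<phi> + b"
  shows "dt T F t y = c *\<^sub>R \<phi> t"
proof -
  have "((\<lambda>s. c *\<^sub>R integral {0..s} \<phi> + b) has_vector_derivative c *\<^sub>R \<phi> t) (at t within {0..T})"
    by (intro has_vector_derivative_add_const[THEN iffD2]
        bounded_linear.has_vector_derivative[OF bounded_linear_scaleR_right]
        integral_has_vector_derivative assms(2,3))
  then show ?thesis
    unfolding dt_def assms(4) using assms(1,2)
    by (intro vector_derivative_within_closed_interval) auto
qed

locale space_time_cylinder =
  fixes U :: "(real \<times> vec3) set" and \<Omega> :: "vec3 set" and T :: real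
  assumes open_U: "open U" and open_\<Omega>: "open \<Omega>" and T_pos: "T > 0"
    and cylinder_subset: "{0..T} \<times> \<Omega> \<subseteq> U"
begin

lemma in_U: "t \<in> {0..T} \<Longrightarrow> y \<in> \<Omega> \<Longrightarrow> (t, y) \<in> U"
  using cylinder_subset by blast

lemma has_partials_linear_slice:
  assumes "smooth_on U g" and "bounded_linear L" and "t \<in> {0..T}" and "y \<in> \<Omega>"
  shows "has_partials (\<lambda>y. L (g (t, y))) (\<lambda>k. L (pdx k g (t, y))) y"
  using has_partials_slice[OF assms(1) in_U[OF assms(3,4)]]
  by (rule has_partials_bounded_linear[OF assms(2)])

lemma has_partials_dx_slice:
  assumes "smooth_on U g" and "bounded_linear L" and "t \<in> {0..T}" and "x \<in> \<Omega>"
  shows "has_partials (\<lambda>y. dx j (\<lambda>y. L (g (t, y))) y) (\<lambda>i. L (pdx i (pdx j g) (t, x))) x"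
proof (rule has_partials_cong_open[OF open_\<Omega> \<open>x \<in> \<Omega>\<close>])
  show "dx j (\<lambda>y. L (g (t, y))) y = L (pdx j g (t, y))" if "y \<in> \<Omega>" for y
    using has_partials_dx[OF has_partials_linear_slice[OF assms(1-3) that]] .
  show "has_partials (\<lambda>y. L (pdx j g (t, y))) (\<lambda>i. L (pdx i (pdx j g) (t, x))) x"
    by (rule has_partials_linear_slice[OF smooth_on_pdx[OF assms(1)] assms(2-4)])
qed

lemma has_partials_curl_slice:
  assumes "smooth_on U g" and "bounded_linear L" and "t \<in> {0..T}" and "x \<in> \<Omega>"
  shows "has_partials (\<lambda>y. curl (\<lambda>y. L (g (t, y))) y)
    (\<lambda>i. curl_of (\<lambda>k. L (pdx i (pdx k g) (t, x)))) x"
proof (rule has_partials_cong_open[OF open_\<Omega> \<open>x \<in> \<Omega>\<close>])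
  show "curl (\<lambda>y. L (g (t, y))) y = curl_of (\<lambda>k. L (pdx k g (t, y)))" if "y \<in> \<Omega>" for y
    by (rule curl_eq_curl_of[OF has_partials_linear_slice[OF assms(1-3) that]])
  show "has_partials (\<lambda>y. curl_of (\<lambda>k. L (pdx k g (t, y))))
      (\<lambda>i. curl_of (\<lambda>k. L (pdx i (pdx k g) (t, x)))) x"
    using has_partials_linear_slice[OF smooth_on_pdx[OF assms(1)] assms(2-4)]
    by (rule has_partials_curl_of)
qed

lemma has_partials_divm_slice:
  assumes "smooth_on U g" and "bounded_linear L" and "t \<in> {0..T}" and "x \<in> \<Omega>"
  shows "has_partials (\<lambda>y. divm (\<lambda>y. L (g (t, y))) y)
    (\<lambda>i. div_of (\<lambda>k. L (pdx i (pdx k g) (t, x)))) x"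
proof (rule has_partials_cong_open[OF open_\<Omega> \<open>x \<in> \<Omega>\<close>])
  show "divm (\<lambda>y. L (g (t, y))) y = div_of (\<lambda>k. L (pdx k g (t, y)))" if "y \<in> \<Omega>" for y
    by (rule divm_eq_div_of[OF has_partials_linear_slice[OF assms(1-3) that]])
  show "has_partials (\<lambda>y. div_of (\<lambda>k. L (pdx k g (t, y))))
      (\<lambda>i. div_of (\<lambda>k. L (pdx i (pdx k g) (t, x)))) x"
    using has_partials_linear_slice[OF smooth_on_pdx[OF assms(1)] assms(2-4)]
    by (rule has_partials_div_of)
qed

lemma hess_slice:
  assumes "smooth_on U g" and "bounded_linear L" and "t \<in> {0..T}" and "x \<in> \<Omega>"
  shows "hess (\<lambda>y. L (g (t, y))) x = (\<chi> i j. L (pdx i (pdx j g) (t, x)))"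
  unfolding hess_def using has_partials_dx[OF has_partials_dx_slice[OF assms]] by simp

lemma inc_slice:
  assumes "smooth_on U g" and "t \<in> {0..T}" and "x \<in> \<Omega>"
  shows "inc (\<lambda>y. g (t, y)) x = curl_of (\<lambda>i. transpose (curl_of (\<lambda>k. pdx i (pdx k g) (t, x))))"
  unfolding inc_def
  using curl_eq_curl_of[OF has_partials_bounded_linear[OF bounded_linear_transpose
        has_partials_curl_slice[OF assms(1) bounded_linear_ident assms(2,3)]]] .

lemma divdiv_slice:
  assumes "smooth_on U g" and "bounded_linear L" and "t \<in> {0..T}" and "x \<in> \<Omega>"
  shows "divdiv (\<lambda>y. L (g (t, y))) x =
    trace (grad_of (\<lambda>i. div_of (\<lambda>k. L (pdx i (pdx k g) (t, x)))))"
  unfolding divdiv_def by (rule divv_eq_trace_grad_of[OF has_partials_divm_slice[OF assms]])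

lemma continuous_on_divm_slices:
  assumes "smooth_on U g" and "bounded_linear L" and "y \<in> \<Omega>"
  shows "continuous_on {0..T} (\<lambda>s. divm (\<lambda>y. L (g (s, y))) y)"
proof (rule continuous_on_eq)
  show "continuous_on {0..T} (\<lambda>s. div_of (\<lambda>k. L (pdx k g (s, y))))"
    unfolding div_of_def using in_U[OF _ assms(3)]
    by (intro continuous_on_vec_lambda continuous_on_sum continuous_on_component
        bounded_linear.continuous_on[OF assms(2)]
        continuous_on_compose2[OF smooth_on_continuous_on[OF smooth_on_pdx[OF assms(1)]]])
      (auto intro!: continuous_intros)
  show "div_of (\<lambda>k. L (pdx k g (s, y))) = divm (\<lambda>y. L (g (s, y))) y" if "s \<in> {0..T}" for s
    by (rule divm_eq_div_of[OF has_partials_linear_slice[OF assms(1,2) that assms(3)], symmetric])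
qed

lemma defo_dt_integral_divm:
  assumes "smooth_on U g" and "bounded_linear L" and "t \<in> {0..T}" and "x \<in> \<Omega>"
    and "\<And>s y. F s y = c *\<^sub>R integral {0..s} (\<lambda>s. divm (\<lambda>y. L (g (s, y))) y) + b y"
  shows "defo (\<lambda>y. dt T F t y) x = c *\<^sub>R symm (grad (\<lambda>y. divm (\<lambda>y. L (g (t, y))) y) x)"
proof -
  let ?P = "\<lambda>i. div_of (\<lambda>k. L (pdx i (pdx k g) (t, x)))"
  have "has_partials (\<lambda>y. dt T F t y) (\<lambda>i. c *\<^sub>R ?P i) x"
  proof (rule has_partials_cong_open[OF open_\<Omega> \<open>x \<in> \<Omega>\<close>])
    show "dt T F t y = c *\<^sub>R divm (\<lambda>y. L (g (t, y))) y" if "y \<in> \<Omega>" for y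
      using T_pos assms(3) continuous_on_divm_slices[OF assms(1,2) that] assms(5)
      by (rule dt_integral)
    show "has_partials (\<lambda>y. c *\<^sub>R divm (\<lambda>y. L (g (t, y))) y) (\<lambda>i. c *\<^sub>R ?P i) x"
      using has_partials_divm_slice[OF assms(1-4)]
      by (rule has_partials_bounded_linear[OF bounded_linear_scaleR_right])
  qed
  from grad_eq_grad_of[OF this] grad_eq_grad_of[OF has_partials_divm_slice[OF assms(1-4)]]
  show ?thesis
    unfolding defo_def by (simp add: grad_of_def symm_def transpose_def vec_eq_iff algebra_simps)
qed

lemma linear_constraint_pdx:
  assumes "smooth_on U g" and "bounded_linear L" and "t \<in> {0..T}" and "x \<in> \<Omega>"
    and "\<And>y. y \<in> \<Omega> \<Longrightarrow> L (g (t, y)) = 0"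
  shows "L (pdx k g (t, x)) = 0"
proof -
  have "has_partials (\<lambda>y. L (g (t, y))) (\<lambda>k. 0) x"
    by (rule has_partials_cong_open[OF open_\<Omega> \<open>x \<in> \<Omega>\<close> assms(5) has_partials_const])
  then show ?thesis
    using has_partials_unique[OF has_partials_linear_slice[OF assms(1-4)]] by metis
qed

lemma linear_constraint_second_partials:
  assumes "smooth_on U g" and "bounded_linear L" and "t \<in> {0..T}" and "x \<in> \<Omega>"
    and "\<And>y. y \<in> \<Omega> \<Longrightarrow> L (g (t, y)) = 0"
  shows "L (pdx i (pdx j g) (t, x)) = 0"
proof -
  have "L (pdx j g (t, y)) = 0" if "y \<in> \<Omega>" for y
    by (rule linear_constraint_pdx[OF assms(1-3) that assms(5)])
  then show ?thesis
    by (rule linear_constraint_pdx[OF smooth_on_pdx[OF assms(1)] assms(2-4)])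
qed

lemma Smap_inc_slice:
  assumes "smooth_on U g" and "t \<in> {0..T}" and "x \<in> \<Omega>"
    and "\<And>y. y \<in> \<Omega> \<Longrightarrow> transpose (g (t, y)) = g (t, y)"
    and "divdiv (\<lambda>y. Smap (g (t, y))) x = 0"
  shows "Smap (inc (\<lambda>y. g (t, y)) x) =
    Smap_inv (symm (curl (\<lambda>y. curl (\<lambda>y. Smap (g (t, y))) y) x))
    + symm (grad (\<lambda>y. divm (\<lambda>y. Smap (g (t, y))) y) x) + hess (\<lambda>y. trace (g (t, y))) x"
proof -
  define D where "D i j = pdx i (pdx j g) (t, x)" for i j
  have "D i j = D j i" for i j
    unfolding D_def using open_U assms(1) in_U[OF assms(2,3)] space_direction_in_Basis space_direction_in_Basis
    by (rule smooth_on_pd_commute)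
  moreover have "transpose (D i j) = D i j" for i j
    using linear_constraint_second_partials[OF assms(1)
        bounded_linear_sub[OF bounded_linear_transpose bounded_linear_ident] assms(2,3)] assms(4)
    by (simp add: D_def)
  moreover have "trace (grad_of (\<lambda>i. div_of (\<lambda>k. Smap (D i k)))) = 0"
    using assms(5) divdiv_slice[OF assms(1) bounded_linear_Smap assms(2,3)] by (simp add: D_def)
  ultimately show ?thesis
    using Smap_inc_identity inc_slice[OF assms(1-3)] hess_slice[OF assms(1) bounded_linear_trace assms(2,3)]
      curl_eq_curl_of[OF has_partials_curl_slice[OF assms(1) bounded_linear_Smap assms(2,3)]]
      grad_eq_grad_of[OF has_partials_divm_slice[OF assms(1) bounded_linear_Smap assms(2,3)]]
    by (simp add: D_def)
qed

lemma pdx_pdt_eq_neg_curl: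
  assumes "smooth_on U a" and "smooth_on U g" and "t \<in> {0..T}" and "x \<in> \<Omega>"
    and "\<And>y. y \<in> \<Omega> \<Longrightarrow> dt T (\<lambda>s y. a (s, y)) t y = - curl (\<lambda>y. Smap (g (t, y))) y"
  shows "pdx k (pdt a) (t, x) = - curl_of (\<lambda>j. Smap (pdx k (pdx j g) (t, x)))"
proof -
  have "has_partials (\<lambda>y. pdt a (t, y)) (\<lambda>k. - curl_of (\<lambda>j. Smap (pdx k (pdx j g) (t, x)))) x"
  proof (rule has_partials_cong_open[OF open_\<Omega> \<open>x \<in> \<Omega>\<close>])
    show "pdt a (t, y) = - curl (\<lambda>y. Smap (g (t, y))) y" if "y \<in> \<Omega>" for y
      using dt_eq_pdt[OF assms(1) T_pos assms(3) in_U[OF assms(3) that]] assms(5)[OF that] by simp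
    show "has_partials (\<lambda>y. - curl (\<lambda>y. Smap (g (t, y))) y)
        (\<lambda>k. - curl_of (\<lambda>j. Smap (pdx k (pdx j g) (t, x)))) x"
      by (rule has_partials_bounded_linear[OF bounded_linear_minus[OF bounded_linear_ident]
            has_partials_curl_slice[OF assms(2) bounded_linear_Smap assms(3,4)]])
  qed
  then show ?thesis
    using has_partials_unique[OF has_partials_slice[OF smooth_on_pdt[OF assms(1)]
          in_U[OF assms(3,4)]]] by metis
qed

lemma dt_dt_eq_neg_curl_curl:
  assumes "smooth_on U a" and "smooth_on U g" and "t \<in> {0..T}" and "x \<in> \<Omega>"
    and "\<And>s. s \<in> {0..T} \<Longrightarrow> Smap (dt T (\<lambda>s y. g (s, y)) s x) = symm (curl (\<lambda>y. a (s, y)) x)"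
    and "\<And>y. y \<in> \<Omega> \<Longrightarrow> dt T (\<lambda>s y. a (s, y)) t y = - curl (\<lambda>y. Smap (g (t, y))) y"
  shows "dt T (dt T (\<lambda>s y. g (s, y))) t x =
    - Smap_inv (symm (curl (\<lambda>y. curl (\<lambda>y. Smap (g (t, y))) y) x))"
proof -
  let ?L = "\<lambda>M. Smap_inv (symm M)"
  have L: "bounded_linear ?L"
    by (rule bounded_linear_compose[OF bounded_linear_Smap_inv bounded_linear_symm])
  have dt_g: "dt T (\<lambda>s y. g (s, y)) s x = ?L (curl_of (\<lambda>k. pdx k a (s, x)))" if "s \<in> {0..T}" for s
    using assms(5)[OF that] curl_eq_curl_of[OF has_partials_slice[OF assms(1) 
        in_U[OF that assms(4)]]]
    by (metis Smap_inv_Smap)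
  have "((\<lambda>s. ?L (curl_of (\<lambda>k. pdx k a (s, x)))) has_vector_derivative
      ?L (curl_of (\<lambda>k. pdt (pdx k a) (t, x)))) (at t)"
    by (intro bounded_linear.has_vector_derivative[OF L] has_vector_derivative_curl_of
        has_vector_derivative_time_slice[OF smooth_on_pdx[OF assms(1)] in_U[OF assms(3,4)]])
  then have "((\<lambda>s. ?L (curl_of (\<lambda>k. pdx k a (s, x)))) has_vector_derivative
      ?L (curl_of (\<lambda>k. pdt (pdx k a) (t, x)))) (at t within {0..T})"
    by (rule has_vector_derivative_at_within)
  with assms(3) dt_g have "((\<lambda>s. dt T (\<lambda>s y. g (s, y)) s x) has_vector_derivative
      ?L (curl_of (\<lambda>k. pdt (pdx k a) (t, x)))) (at t within {0..T})"
    by (rule has_vector_derivative_transform)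
  then have "dt T (dt T (\<lambda>s y. g (s, y))) t x = ?L (curl_of (\<lambda>k. pdt (pdx k a) (t, x)))"
    unfolding dt_def[of T "dt T _"] using T_pos assms(3)
    by (intro vector_derivative_within_closed_interval)
  also have "\<dots> = ?L (curl_of (\<lambda>k. - curl_of (\<lambda>j. Smap (pdx k (pdx j g) (t, x)))))"
    using smooth_on_pd_commute[OF open_U assms(1) in_U[OF assms(3,4)]
        space_direction_in_Basis time_direction_in_Basis]
      pdx_pdt_eq_neg_curl[OF assms(1-4,6)] by simp
  also have "\<dots> = - ?L (curl_of (\<lambda>k. curl_of (\<lambda>j. Smap (pdx k (pdx j g) (t, x)))))"
    by (simp add: curl_of_uminus linear_neg[OF bounded_linear.linear[OF L]])
  also have "\<dots> = - ?L (curl (\<lambda>y. curl (\<lambda>y. Smap (g (t, y))) y) x)"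
    using curl_eq_curl_of[OF has_partials_curl_slice[OF assms(2) bounded_linear_Smap assms(3,4)]] by simp
  finally show ?thesis .
qed

end

theorem lemma2p4:
  fixes \<Omega> :: "vec3 set" and U :: "(real \<times> vec3) set" and T :: real
    and A \<gamma> :: "real \<Rightarrow> vec3 \<Rightarrow> mat3"
    and \<alpha> :: "real \<Rightarrow> vec3 \<Rightarrow> real" and \<beta> :: "real \<Rightarrow> vec3 \<Rightarrow> vec3"
  assumes "open \<Omega>" and "T > 0"
    and "open U" and "{0..T} \<times> \<Omega> \<subseteq> U"
    and "smooth_on U (\<lambda>(t, x). A t x)" and "smooth_on U (\<lambda>(t, x). \<gamma> t x)"
    and "\<And>t x. t \<in> {0..T} \<Longrightarrow> x \<in> \<Omega> \<Longrightarrow> trace (A t x) = 0"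
    and "\<And>t x. t \<in> {0..T} \<Longrightarrow> x \<in> \<Omega> \<Longrightarrow> transpose (\<gamma> t x) = \<gamma> t x"
    and "\<And>t x. t \<in> {0..T} \<Longrightarrow> x \<in> \<Omega> \<Longrightarrow> divm (A t) x = 0"
    and "\<And>t x. t \<in> {0..T} \<Longrightarrow> x \<in> \<Omega> \<Longrightarrow>
           dt T A t x + curl (\<lambda>y. Smap (\<gamma> t y)) x = 0"
    and "\<And>t x. t \<in> {0..T} \<Longrightarrow> x \<in> \<Omega> \<Longrightarrow>
           Smap (dt T \<gamma> t x) - symm (curl (A t) x) = 0"
    and "\<And>t x. t \<in> {0..T} \<Longrightarrow> x \<in> \<Omega> \<Longrightarrow> divdiv (\<lambda>y. Smap (\<gamma> t y)) x = 0"
    and "\<And>t x. \<alpha> t x = (1/2) * trace (\<gamma> t x)"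
    and "\<And>t x. \<beta> t x = (1/2) *\<^sub>R integral {0..t} (\<lambda>s. divm (\<lambda>y. Smap (\<gamma> s y)) x)
                         + vskw (A 0 x)"
  shows "\<forall>t\<in>{0..T}. \<forall>x\<in>\<Omega>.
           dt T (dt T \<gamma>) t x + Smap (inc (\<gamma> t) x) - 2 *\<^sub>R defo (\<lambda>y. dt T \<beta> t y) x
             - 2 *\<^sub>R hess (\<alpha> t) x = 0"
proof (intro ballI)
  fix t x
  assume t: "t \<in> {0..T}" and x: "x \<in> \<Omega>"
  interpret space_time_cylinder U \<Omega> T
    using assms(1-4) by unfold_locales
  define g where "g = (\<lambda>(t, x). \<gamma> t x)"
  define a where "a = (\<lambda>(t, x). A t x)"
  have \<gamma>_eq: "\<gamma> = (\<lambda>t y. g (t, y))" and A_eq: "A = (\<lambda>t y. a (t, y))"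
    and \<alpha>_eq: "\<alpha> = (\<lambda>t y. (1/2) * trace (g (t, y)))"
    by (simp_all add: g_def a_def fun_eq_iff assms(13))
  have g: "smooth_on U g" and a: "smooth_on U a"
    using assms(5,6) by (simp_all add: g_def a_def)
  have "Smap (inc (\<gamma> t) x) =
      Smap_inv (symm (curl (\<lambda>y. curl (\<lambda>y. Smap (\<gamma> t y)) y) x))
      + symm (grad (\<lambda>y. divm (\<lambda>y. Smap (\<gamma> t y)) y) x) + hess (\<lambda>y. trace (\<gamma> t y)) x"
    unfolding \<gamma>_eq by (rule Smap_inc_slice[OF g t x]) (use assms(8,12) t x in \<open>simp_all add: \<gamma>_eq\<close>)
  moreover have "dt T (dt T \<gamma>) t x = - Smap_inv (symm (curl (\<lambda>y. curl (\<lambda>y. Smap (\<gamma> t y)) y) x))"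
    unfolding \<gamma>_eq
    by (rule dt_dt_eq_neg_curl_curl[OF a g t x])
      (use assms(10,11) t x in \<open>auto simp: \<gamma>_eq A_eq eq_neg_iff_add_eq_0\<close>)
  moreover have "2 *\<^sub>R defo (\<lambda>y. dt T \<beta> t y) x = symm (grad (\<lambda>y. divm (\<lambda>y. Smap (\<gamma> t y)) y) x)"
    using defo_dt_integral_divm[OF g bounded_linear_Smap t x, where F = \<beta> and c = "1/2"]
    by (simp add: assms(14) \<gamma>_eq)
  moreover have "2 *\<^sub>R hess (\<alpha> t) x = hess (\<lambda>y. trace (\<gamma> t y)) x"
    using hess_slice[OF g bounded_linear_compose[OF bounded_linear_mult_right bounded_linear_trace]
        t x, of "1/2"] hess_slice[OF g bounded_linear_trace t x]
    by (simp add: \<alpha>_eq \<gamma>_eq vec_eq_iff mult.commute)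
  ultimately show "dt T (dt T \<gamma>) t x + Smap (inc (\<gamma> t) x) - 2 *\<^sub>R defo (\<lambda>y. dt T \<beta> t y) x
      - 2 *\<^sub>R hess (\<alpha> t) x = 0"
    by simp
qed

end
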